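(* Consider a system with a finite set $S$ of tasks, periods $\tau_X$, frame length $T=\mathrm{lcm}\{\tau_X : X\in S\}$ and per-execution rewards $r^1_X\ge r^2_X\ge\dots\ge r^{\tau_X}_X\ge 0$ (as in the context). Let $n=(n^i_X)_{X\in S,\,1\le i\le\tau_X}$ be a vector of integers satisfying $0\le n^i_X\le T/\tau_X$ for all $X\in S$, $1\le i\le \tau_X$, and $\sum_{X\in S}\sum_{i=1}^{\tau_X} n^i_X\le T$. Then there exists a scheduling policy under which the average reward of every task $X\in S$ satisfies $q_X\ge\sum_{i=1}^{\tau_X} n^i_X r^i_X$.
   Context: A system consists of a finite set $S$ of tasks. Time is slotted, $t\in\{0,1,2,\dots\}$. Each task $X\in S$ has a period $\tau_X$ (a positive integer); time is partitioned into consecutive periods of $X$ of $\tau_X$ slots each, the first starting at $t=0$. In each period, task $X$ has one job, which is removed from the system at the end of that period. Let $T$ be the least common multiple of $\{\tau_X : X\in S\}$; time is partitioned into consecutive frames of $T$ slots each, the first starting at $t=0$. A scheduling policy chooses in each time slot either to idle or to execute the job of exactly one task; a job may be executed in any number of slots within its period. Each task $X$ has rewards $r^1_X\ge r^2_X\ge\dots\ge r^{\tau_X}_X\ge 0$: when the job of $X$ is executed for the $i$-th time within a period, $X$ obtains reward $r^i_X$. Let $s_X(t)$ be the total reward obtained by $X$ between time $0$ and time $t$; the average reward of $X$ is $q_X=\liminf_{t\to\infty} s_X(t)/(t/T)$. *)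

theory Defs
  imports "HOL-Analysis.Analysis" "HOL-Library.Liminf_Limsup"
begin

text \<open>A schedule assigns to each time slot either idling (None) or one task (Some X).\<close>
type_synonym 'a schedule = "nat \<Rightarrow> 'a option"

definition valid_schedule :: "'a set \<Rightarrow> 'a schedule \<Rightarrow> bool" where
  "valid_schedule S \<sigma> \<longleftrightarrow> (\<forall>t X. \<sigma> t = Some X \<longrightarrow> X \<in> S)"

definition frame_len :: "'a set \<Rightarrow> ('a \<Rightarrow> nat) \<Rightarrow> nat" where
  "frame_len S tau = Lcm (tau ` S)"

definition exec_index :: "('a \<Rightarrow> nat) \<Rightarrow> 'a schedule \<Rightarrow> 'a \<Rightarrow> nat \<Rightarrow> nat" where
  "exec_index tau \<sigma> X t =
     card {s. (t div tau X) * tau X \<le> s \<and> s \<le> t \<and> \<sigma> s = Some X}"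

definition slot_reward ::
  "('a \<Rightarrow> nat) \<Rightarrow> ('a \<Rightarrow> nat \<Rightarrow> real) \<Rightarrow> 'a schedule \<Rightarrow> 'a \<Rightarrow> nat \<Rightarrow> real" where
  "slot_reward tau r \<sigma> X t = (if \<sigma> t = Some X then r X (exec_index tau \<sigma> X t) else 0)"

definition total_reward ::
  "('a \<Rightarrow> nat) \<Rightarrow> ('a \<Rightarrow> nat \<Rightarrow> real) \<Rightarrow> 'a schedule \<Rightarrow> 'a \<Rightarrow> nat \<Rightarrow> real" where
  "total_reward tau r \<sigma> X t = (\<Sum>s<t. slot_reward tau r \<sigma> X s)"

definition avg_reward ::
  "'a set \<Rightarrow> ('a \<Rightarrow> nat) \<Rightarrow> ('a \<Rightarrow> nat \<Rightarrow> real) \<Rightarrow> 'a schedule \<Rightarrow> 'a \<Rightarrow> ereal" where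
  "avg_reward S tau r \<sigma> X =
     liminf (\<lambda>t. ereal (total_reward tau r \<sigma> X t / (real t / real (frame_len S tau))))"

end

theory Submission
  imports Defs
begin

text \<open>
  Let \<open>m\<^sub>X = T / \<tau>\<^sub>X\<close> be the number of periods of \<open>X\<close> in a frame and write
  \<open>N\<^sub>X = \<Sum>\<^sub>i n\<^sup>i\<^sub>X = q\<^sub>X m\<^sub>X + s\<^sub>X\<close> with \<open>s\<^sub>X < m\<^sub>X\<close>. If in every frame \<open>X\<close> is executed
  at least \<open>q\<^sub>X\<close> times in each of its periods and more often in at least \<open>s\<^sub>X\<close> of them, then,
  since the rewards decrease and \<open>n\<^sup>i\<^sub>X \<le> m\<^sub>X\<close>, an exchange argument shows that each frame earns
  \<open>X\<close> at least \<open>m\<^sub>X \<Sum>\<^bsub>i\<le>q\<^sub>X\<^esub> r\<^sup>i\<^sub>X + s\<^sub>X r\<^sup>q\<^sup>+\<^sup>1\<^sub>X \<ge> \<Sum>\<^sub>i n\<^sup>i\<^sub>X r\<^sup>i\<^sub>X\<close>, which gives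
  the bound on the liminf.

  Such a frame exists by Hall's theorem. The jobs \<open>(X, p, k)\<close>, \<open>k \<le> q\<^sub>X\<close>, are matched to
  slots of period \<open>p\<close> of \<open>X\<close>; the optional jobs \<open>k = q\<^sub>X\<close> may instead be matched to one of
  \<open>m\<^sub>X - s\<^sub>X\<close> dummy vertices. Letting every job spread weight \<open>T\<close> over its candidates loads
  each slot with at most \<open>\<Sum>\<^sub>X N\<^sub>X \<le> T\<close> and each dummy with exactly \<open>T\<close>, and double
  counting yields Hall's condition. The policy repeats the matched frame forever.
\<close>

definition hall_condition :: "'i set \<Rightarrow> ('i \<Rightarrow> 'b set) \<Rightarrow> bool" where
  "hall_condition I A \<longleftrightarrow> (\<forall>J\<subseteq>I. card J \<le> card (\<Union>(A ` J)))"

lemma hall_condition_subset: "hall_condition I A \<Longrightarrow> J \<subseteq> I \<Longrightarrow> hall_condition J A"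
  by (auto simp: hall_condition_def)

lemma hall_condition_remove_critical:
  assumes fin: "finite I" "\<forall>i\<in>I. finite (A i)" and hall: "hall_condition I A"
    and J: "J \<subseteq> I" "card (\<Union>(A ` J)) = card J"
  shows "hall_condition (I - J) (\<lambda>i. A i - \<Union>(A ` J))"
  unfolding hall_condition_def
proof (intro allI impI)
  fix K assume K: "K \<subseteq> I - J"
  let ?U = "\<Union>(A ` J)" and ?B = "\<Union>i\<in>K. A i - \<Union>(A ` J)"
  have finK: "finite K" using K fin(1) by (meson Diff_subset finite_subset subset_trans)
  have finJ: "finite J" using J(1) fin(1) by (rule finite_subset)
  have finU: "finite ?U" using finJ J fin(2) by auto
  have finB: "finite ?B"
    by (rule finite_subset[of _ "\<Union>(A ` K)"]) (use finK K fin(2) in auto)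
  have "card K + card J = card (K \<union> J)"
    using K finK finJ by (subst card_Un_disjoint) auto
  also have "\<dots> \<le> card (\<Union>(A ` (K \<union> J)))"
    by (intro hall[unfolded hall_condition_def, rule_format]) (use K J in auto)
  also have "\<Union>(A ` (K \<union> J)) = ?B \<union> ?U" by auto
  also have "card (?B \<union> ?U) = card ?B + card J"
    using finB finU J by (subst card_Un_disjoint) auto
  finally show "card K \<le> card ?B" by simp
qed

lemma hall_condition_remove_one:
  assumes fin: "finite I" "\<forall>i\<in>I. finite (A i)" and hall: "hall_condition I A"
    and no_critical: "\<forall>J. J \<subseteq> I \<and> J \<noteq> {} \<and> J \<noteq> I \<longrightarrow> card (\<Union>(A ` J)) \<noteq> card J"
    and i0: "i0 \<in> I"
  shows "hall_condition (I - {i0}) (\<lambda>i. A i - {x})"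
  unfolding hall_condition_def
proof (intro allI impI)
  fix K assume K: "K \<subseteq> I - {i0}"
  show "card K \<le> card (\<Union>i\<in>K. A i - {x})"
  proof (cases "K = {}")
    case False
    have "finite K" using K fin(1) by (meson Diff_subset finite_subset subset_trans)
    then have "finite (\<Union>(A ` K))" using K fin(2) by auto
    moreover have "card K < card (\<Union>(A ` K))"
    proof -
      have "card K \<le> card (\<Union>(A ` K))" using hall K unfolding hall_condition_def by blast
      moreover have "card (\<Union>(A ` K)) \<noteq> card K" using no_critical K i0 False by blast
      ultimately show ?thesis by simp
    qed
    moreover have "card (\<Union>(A ` K)) - card {x} \<le> card (\<Union>(A ` K) - {x})"
      by (rule diff_card_le_card_Diff) simp
    moreover have "(\<Union>i\<in>K. A i - {x}) = \<Union>(A ` K) - {x}" by auto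
    ultimately show ?thesis by simp
  qed simp
qed

theorem hall_marriage:
  assumes "finite I" "\<forall>i\<in>I. finite (A i)" "hall_condition I A"
  shows "\<exists>f. inj_on f I \<and> (\<forall>i\<in>I. f i \<in> A i)"
  using assms
proof (induction "card I" arbitrary: I A rule: less_induct)
  case less
  note fin = less.prems(1,2) and hall = less.prems(3)
  consider (empty) "I = {}"
    | (critical) J where "J \<subseteq> I" "J \<noteq> {}" "J \<noteq> I" "card (\<Union>(A ` J)) = card J"
    | (no_critical) "I \<noteq> {}"
        "\<forall>J. J \<subseteq> I \<and> J \<noteq> {} \<and> J \<noteq> I \<longrightarrow> card (\<Union>(A ` J)) \<noteq> card J"
    by blast
  then show ?case
  proof cases
    case critical
    let ?U = "\<Union>(A ` J)"
    have "card J < card I" "card (I - J) < card I"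
      using critical fin by (auto intro!: psubset_card_mono)
    moreover have "finite J" using critical(1) fin(1) by (rule finite_subset)
    ultimately obtain f1 where f1: "inj_on f1 J" "\<forall>i\<in>J. f1 i \<in> A i"
      using less.hyps[of J A] critical(1) fin(2) hall_condition_subset[OF hall] by blast
    obtain f2 where f2: "inj_on f2 (I - J)" "\<forall>i\<in>I - J. f2 i \<in> A i - ?U"
      using less.hyps[of "I - J" "\<lambda>i. A i - ?U"] \<open>card (I - J) < card I\<close> fin
        hall_condition_remove_critical[OF fin hall critical(1,4)] by blast
    define f where "f i = (if i \<in> J then f1 i else f2 i)" for i
    have "f1 ` J \<subseteq> ?U" using f1(2) by blast
    moreover have "f2 ` (I - J) \<inter> ?U = {}" using f2(2) by blast
    ultimately have "inj_on f (J \<union> (I - J))"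
      unfolding f_def by (intro inj_on_disjoint_Un[OF f1(1) f2(1)]) blast
    moreover have "J \<union> (I - J) = I" using critical(1) by blast
    moreover have "\<forall>i\<in>I. f i \<in> A i" using f1(2) f2(2) by (simp add: f_def)
    ultimately show ?thesis by auto
  next
    case no_critical
    then obtain i0 where i0: "i0 \<in> I" by blast
    have "card {i0} \<le> card (A i0)"
      using hall[unfolded hall_condition_def, rule_format, of "{i0}"] i0 by simp
    then have "A i0 \<noteq> {}" by auto
    then obtain x where x: "x \<in> A i0" by blast
    have "card (I - {i0}) < card I" by (rule card_Diff1_less[OF fin(1) i0])
    then obtain f where f: "inj_on f (I - {i0})" "\<forall>i\<in>I - {i0}. f i \<in> A i - {x}"
      using less.hyps[of "I - {i0}" "\<lambda>i. A i - {x}"] fin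
        hall_condition_remove_one[OF fin hall no_critical(2) i0] by blast
    have "inj_on (f(i0 := x)) I" using f unfolding inj_on_def by auto
    moreover have "\<forall>i\<in>I. (f(i0 := x)) i \<in> A i" using f(2) x by simp
    ultimately show ?thesis by (intro exI conjI)
  qed simp
qed

lemma hall_condition_of_weights:
  fixes w :: "'i \<Rightarrow> 'b \<Rightarrow> nat"
  assumes fin: "finite I" "\<forall>i\<in>I. finite (A i)" and c: "0 < c"
    and out: "\<forall>i\<in>I. (\<Sum>b\<in>A i. w i b) = c"
    and load: "\<forall>b\<in>\<Union>(A ` I). (\<Sum>i\<in>I. w i b) \<le> c"
  shows "hall_condition I A"
  unfolding hall_condition_def
proof (intro allI impI)
  fix J assume J: "J \<subseteq> I"
  let ?U = "\<Union>(A ` J)"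
  have "finite J" using J fin(1) by (rule finite_subset)
  then have finU: "finite ?U" using J fin(2) by auto
  have "c * card J = (\<Sum>i\<in>J. c)" by simp
  also have "\<dots> = (\<Sum>i\<in>J. \<Sum>b\<in>A i. w i b)" using out J by (intro sum.cong) auto
  also have "\<dots> \<le> (\<Sum>i\<in>J. \<Sum>b\<in>?U. w i b)"
    using finU by (intro sum_mono sum_mono2) auto
  also have "\<dots> = (\<Sum>b\<in>?U. \<Sum>i\<in>J. w i b)" by (rule sum.swap)
  also have "\<dots> \<le> (\<Sum>b\<in>?U. \<Sum>i\<in>I. w i b)"
    using fin J by (intro sum_mono sum_mono2) auto
  also have "\<dots> \<le> (\<Sum>b\<in>?U. c)" using load J by (intro sum_mono) blast
  also have "\<dots> = c * card ?U" by simp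
  finally show "card J \<le> card ?U" using c by simp
qed

definition balanced_counts :: "nat \<Rightarrow> nat \<Rightarrow> (nat \<Rightarrow> nat) \<Rightarrow> bool" where
  "balanced_counts m N c \<longleftrightarrow>
     (\<forall>p<m. N div m \<le> c p) \<and> N mod m \<le> card {p. p < m \<and> N div m < c p}"

lemma antimono_of_Suc_le:
  fixes r :: "nat \<Rightarrow> real"
  assumes "\<forall>i. 1 \<le> i \<and> i < tau \<longrightarrow> r (Suc i) \<le> r i" and "1 \<le> i" "i \<le> j" "j \<le> tau"
  shows "r j \<le> r i"
  using assms(3,4)
proof (induction j rule: dec_induct)
  case (step k)
  have "r (Suc k) \<le> r k" using assms(1,2,4) step.hyps by simp
  then show ?case using step.IH step.prems by simp
qed simp

lemma sum_le_threshold_exchange: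
  fixes r :: "nat \<Rightarrow> real" and n :: "nat \<Rightarrow> nat" and c :: real
  assumes "q \<le> tau" and n_le: "\<forall>i\<in>{1..tau}. n i \<le> m"
    and above: "\<forall>i\<in>{1..q}. c \<le> r i" and below: "\<forall>i\<in>{q<..tau}. r i \<le> c"
  shows "(\<Sum>i=1..tau. n i * r i) \<le> m * (\<Sum>i=1..q. r i - c) + (\<Sum>i=1..tau. n i) * c"
proof -
  have split: "{1..tau} = {1..q} \<union> {q<..tau}" "{1..q} \<inter> {q<..tau} = {}"
    using assms(1) by auto
  have "(\<Sum>i=1..q. n i * r i) \<le> (\<Sum>i=1..q. m * (r i - c) + n i * c)"
  proof (rule sum_mono)
    fix i assume i: "i \<in> {1..q}"
    have "n i * (r i - c) \<le> m * (r i - c)"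
      using n_le above i assms(1) by (intro mult_right_mono) auto
    then show "n i * r i \<le> m * (r i - c) + n i * c" by (simp add: algebra_simps)
  qed
  moreover have "(\<Sum>i\<in>{q<..tau}. n i * r i) \<le> (\<Sum>i\<in>{q<..tau}. n i * c)"
    using below by (intro sum_mono mult_left_mono) auto
  moreover have "(\<Sum>i=1..tau. f i) = (\<Sum>i=1..q. f i) + (\<Sum>i\<in>{q<..tau}. f i)" for f :: "nat \<Rightarrow> real"
    unfolding split(1) by (rule sum.union_disjoint) (use split(2) in auto)
  ultimately show ?thesis
    by (simp add: sum.distrib sum_distrib_left sum_distrib_right[symmetric] distrib_right)
qed

lemma sum_prefix_ge_next:
  fixes r :: "nat \<Rightarrow> real"
  assumes "q < c" and "\<forall>i\<in>{Suc q..c}. 0 \<le> r i"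
  shows "(\<Sum>i=1..q. r i) + r (Suc q) \<le> (\<Sum>i=1..c. r i)"
proof -
  have "(\<Sum>i=1..c. r i) = (\<Sum>i=1..Suc q. r i) + (\<Sum>i=Suc (Suc q)..c. r i)"
    using assms(1) sum.ub_add_nat[of 1 "Suc q" r "c - Suc q"] by simp
  moreover have "0 \<le> (\<Sum>i=Suc (Suc q)..c. r i)" using assms(2) by (intro sum_nonneg) auto
  ultimately show ?thesis by simp
qed

lemma reward_le_balanced_counts:
  fixes r :: "nat \<Rightarrow> real" and n c :: "nat \<Rightarrow> nat"
  assumes m: "0 < m"
    and decr: "\<forall>i. 1 \<le> i \<and> i < tau \<longrightarrow> r (Suc i) \<le> r i"
    and nonneg: "\<forall>i. 1 \<le> i \<and> i \<le> tau \<longrightarrow> 0 \<le> r i"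
    and n_le: "\<forall>i. 1 \<le> i \<and> i \<le> tau \<longrightarrow> n i \<le> m"
    and balanced: "balanced_counts m (\<Sum>i=1..tau. n i) c"
    and c_le: "\<forall>p<m. c p \<le> tau"
  shows "(\<Sum>i=1..tau. n i * r i) \<le> (\<Sum>p<m. \<Sum>i=1..c p. r i)"
proof -
  define N where "N = (\<Sum>i=1..tau. n i)"
  define q where "q = N div m"
  define s where "s = N mod m"
  \<comment> \<open>the reward of an execution beyond the \<open>q\<close> guaranteed ones; there is none when \<open>q = tau\<close>\<close>
  define thr where "thr = (if q < tau then r (Suc q) else 0)"
  have N: "N = q * m + s" by (simp add: q_def s_def)
  have "N \<le> tau * m" using n_le sum_mono[of "{1..tau}" n "\<lambda>_. m"] by (simp add: N_def)
  then have q_le: "q \<le> tau"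
    using div_le_mono[of N "tau * m" m] m by (simp add: q_def)
  have thr_nonneg: "0 \<le> thr" using nonneg by (simp add: thr_def)
  have "(\<Sum>i=1..tau. n i * r i) \<le> m * (\<Sum>i=1..q. r i - thr) + N * thr"
    unfolding N_def
  proof (rule sum_le_threshold_exchange[OF q_le])
    show "\<forall>i\<in>{1..q}. thr \<le> r i"
      using antimono_of_Suc_le[OF decr] nonneg q_le by (auto simp: thr_def)
    show "\<forall>i\<in>{q<..tau}. r i \<le> thr"
      using antimono_of_Suc_le[OF decr] by (auto simp: thr_def)
  qed (use n_le in auto)
  also have "\<dots> = m * (\<Sum>i=1..q. r i) + s * thr"
    by (simp add: N sum_subtractf algebra_simps)
  also have "\<dots> \<le> (\<Sum>p<m. (\<Sum>i=1..q. r i) + (if q < c p then thr else 0))"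
  proof -
    have "(\<Sum>p<m. if q < c p then thr else 0) = card {p. p < m \<and> q < c p} * thr"
      by (simp add: sum.If_cases Int_def conj_commute)
    moreover have "s \<le> card {p. p < m \<and> q < c p}"
      using balanced by (simp add: balanced_counts_def q_def s_def N_def)
    ultimately show ?thesis
      using thr_nonneg by (simp add: sum.distrib mult_right_mono)
  qed
  also have "\<dots> \<le> (\<Sum>p<m. \<Sum>i=1..c p. r i)"
  proof (rule sum_mono)
    fix p assume p: "p \<in> {..<m}"
    then have q_c: "q \<le> c p" and c_tau: "c p \<le> tau"
      using balanced c_le by (auto simp: balanced_counts_def q_def N_def)
    show "(\<Sum>i=1..q. r i) + (if q < c p then thr else 0) \<le> (\<Sum>i=1..c p. r i)"
    proof (cases "q < c p")
      case True
      then show ?thesis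
        using sum_prefix_ge_next[of q "c p" r] nonneg c_tau by (simp add: thr_def)
    next
      case False
      then show ?thesis using q_c by simp
    qed
  qed
  finally show ?thesis .
qed

definition period_count :: "('a \<Rightarrow> nat) \<Rightarrow> 'a schedule \<Rightarrow> 'a \<Rightarrow> nat \<Rightarrow> nat" where
  "period_count tau \<sigma> X P = card {t\<in>{P * tau X..<P * tau X + tau X}. \<sigma> t = Some X}"

lemma period_count_le: "period_count tau \<sigma> X P \<le> tau X"
  unfolding period_count_def
  by (rule order_trans[OF card_mono[of "{P * tau X..<P * tau X + tau X}"]]) auto

lemma exec_index_in_period:
  assumes "j < tau X"
  shows "exec_index tau \<sigma> X (P * tau X + j)
           = card {t\<in>{P * tau X..<P * tau X + Suc j}. \<sigma> t = Some X}"
proof -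
  have "(P * tau X + j) div tau X = P" using assms by simp
  then show ?thesis unfolding exec_index_def by (intro arg_cong[where f = card]) auto
qed

lemma slot_reward_nonneg:
  assumes "0 < tau X" and "\<forall>i. 1 \<le> i \<and> i \<le> tau X \<longrightarrow> 0 \<le> r X i"
  shows "0 \<le> slot_reward tau r \<sigma> X t"
proof (cases "\<sigma> t = Some X")
  case True
  define P j where "P = t div tau X" and "j = t mod tau X"
  have j: "j < tau X" using assms(1) by (simp add: j_def)
  have t: "t = P * tau X + j" unfolding P_def j_def by (rule div_mult_mod_eq[symmetric])
  let ?C = "{s\<in>{P * tau X..<P * tau X + Suc j}. \<sigma> s = Some X}"
  have "t \<in> ?C" using True t by auto
  then have "1 \<le> card ?C" by (simp add: Suc_le_eq card_gt_0_iff) blast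
  moreover have "card ?C \<le> Suc j"
    by (rule order_trans[OF card_mono[of "{P * tau X..<P * tau X + Suc j}"]]) auto
  moreover have "exec_index tau \<sigma> X t = card ?C"
    using exec_index_in_period[of j tau X \<sigma> P] j t by simp
  ultimately show ?thesis using True j assms(2) by (simp add: slot_reward_def)
qed (simp add: slot_reward_def)

lemma sum_slot_reward_period_prefix:
  assumes "j \<le> tau X"
  shows "(\<Sum>t\<in>{P * tau X..<P * tau X + j}. slot_reward tau r \<sigma> X t)
           = (\<Sum>i=1..card {t\<in>{P * tau X..<P * tau X + j}. \<sigma> t = Some X}. r X i)"
  using assms
proof (induction j)
  case (Suc j)
  let ?C = "\<lambda>j. {t\<in>{P * tau X..<P * tau X + j}. \<sigma> t = Some X}"
  let ?t = "P * tau X + j"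
  have C_Suc: "?C (Suc j) = (if \<sigma> ?t = Some X then insert ?t (?C j) else ?C j)"
    by (auto simp: less_Suc_eq)
  have IH: "(\<Sum>t\<in>{P * tau X..<?t}. slot_reward tau r \<sigma> X t) = (\<Sum>i=1..card (?C j). r X i)"
    using Suc by simp
  have slot: "slot_reward tau r \<sigma> X ?t = (if \<sigma> ?t = Some X then r X (card (?C (Suc j))) else 0)"
    using exec_index_in_period[of j tau X \<sigma> P] Suc.prems by (simp add: slot_reward_def)
  have "?t \<notin> ?C j" by simp
  then have "card (?C (Suc j)) = (if \<sigma> ?t = Some X then Suc (card (?C j)) else card (?C j))"
    unfolding C_Suc by simp
  then show ?case using IH slot by simp
qed simp

lemma total_reward_mono:
  fixes r :: "'a \<Rightarrow> nat \<Rightarrow> real"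
  assumes "0 < tau X" and "\<forall>i. 1 \<le> i \<and> i \<le> tau X \<longrightarrow> 0 \<le> r X i" and "a \<le> b"
  shows "total_reward tau r \<sigma> X a \<le> total_reward tau r \<sigma> X b"
  unfolding total_reward_def
  using assms slot_reward_nonneg[of tau X r] by (intro sum_mono2) auto

lemma total_reward_frames:
  fixes r :: "'a \<Rightarrow> nat \<Rightarrow> real" and n :: "nat \<Rightarrow> nat"
  assumes m: "0 < m"
    and decr: "\<forall>i. 1 \<le> i \<and> i < tau X \<longrightarrow> r X (Suc i) \<le> r X i"
    and nonneg: "\<forall>i. 1 \<le> i \<and> i \<le> tau X \<longrightarrow> 0 \<le> r X i"
    and n_le: "\<forall>i. 1 \<le> i \<and> i \<le> tau X \<longrightarrow> n i \<le> m"
    and balanced: "\<forall>f. balanced_counts m (\<Sum>i=1..tau X. n i) (\<lambda>p. period_count tau \<sigma> X (f * m + p))"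
  shows "k * (\<Sum>i=1..tau X. n i * r X i) \<le> total_reward tau r \<sigma> X (k * (m * tau X))"
proof -
  define h where "h P = (\<Sum>i=1..period_count tau \<sigma> X P. r X i)" for P
  have "total_reward tau r \<sigma> X (k * (m * tau X))
      = (\<Sum>P<k * m. \<Sum>t\<in>{P * tau X..<P * tau X + tau X}. slot_reward tau r \<sigma> X t)"
    by (simp add: total_reward_def sum.nat_group mult.assoc)
  also have "\<dots> = (\<Sum>P<k * m. h P)"
    by (simp add: h_def period_count_def sum_slot_reward_period_prefix)
  also have "\<dots> = (\<Sum>f<k. \<Sum>P\<in>{f * m..<f * m + m}. h P)"
    by (rule sum.nat_group[symmetric])
  also have "\<dots> = (\<Sum>f<k. \<Sum>p<m. h (f * m + p))"
    using sum.shift_bounds_nat_ivl[of h 0 "f * m" m for f]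
    by (simp add: atLeast0LessThan add.commute)
  also have "\<dots> \<ge> (\<Sum>f<k. \<Sum>i=1..tau X. n i * r X i)"
  proof (rule sum_mono)
    fix f
    show "(\<Sum>i=1..tau X. n i * r X i) \<le> (\<Sum>p<m. h (f * m + p))"
      unfolding h_def using balanced period_count_le
      by (intro reward_le_balanced_counts[OF m decr nonneg n_le]) auto
  qed
  finally show ?thesis by simp
qed

lemma liminf_ratio_ge_of_frames:
  fixes s :: "nat \<Rightarrow> real"
  assumes T: "0 < T" and G: "0 \<le> G" and frames: "\<forall>k. k * G \<le> s (k * T)"
    and mono: "\<forall>a b. a \<le> b \<longrightarrow> s a \<le> s b"
  shows "ereal G \<le> liminf (\<lambda>t. ereal (s t / (real t / real T)))"
proof -
  define g where "g t = G * (1 - real T / real t)" for t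
  have "g \<longlonglongrightarrow> G * (1 - 0)" unfolding g_def by (intro tendsto_intros)
  then have "liminf (\<lambda>t. ereal (g t)) = ereal G"
    by (intro lim_imp_Liminf) simp_all
  moreover have "eventually (\<lambda>t. ereal (g t) \<le> ereal (s t / (real t / real T))) sequentially"
    unfolding eventually_sequentially
  proof (intro exI allI impI)
    fix t :: nat assume "1 \<le> t"
    define k where "k = t div T"
    have "t < T + k * T" unfolding k_def by (rule dividend_less_div_times[OF T])
    then have "real t < (real k + 1) * real T"
      by (simp add: algebra_simps flip: of_nat_mult of_nat_add)
    then have "(real t / real T - 1) * G \<le> k * G"
      using T G by (intro mult_right_mono) (simp_all add: field_simps)
    also have "\<dots> \<le> s (k * T)" using frames by blast
    also have "\<dots> \<le> s t" using mono by (simp add: k_def)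
    finally have "(real t / real T - 1) * G * (real T / real t) \<le> s t * (real T / real t)"
      by (rule mult_right_mono) simp
    moreover have "g t = (real t / real T - 1) * G * (real T / real t)"
      using \<open>1 \<le> t\<close> T by (simp add: g_def field_simps)
    ultimately show "ereal (g t) \<le> ereal (s t / (real t / real T))" by simp
  qed
  ultimately show ?thesis using Liminf_mono by metis
qed

lemma in_period_iff:
  fixes d :: nat
  assumes "0 < d"
  shows "p * d \<le> t \<and> t < p * d + d \<longleftrightarrow> t div d = p"
  using assms by (metis add.commute div_nat_eqI div_times_less_eq_dividend
      mult.commute mult_Suc dividend_less_times_div)

locale frame_demand =
  fixes S :: "'a set" and tau :: "'a \<Rightarrow> nat" and T :: nat and N :: "'a \<Rightarrow> nat"
  assumes finite_S: "finite S"
    and tau_pos: "\<And>X. X \<in> S \<Longrightarrow> 0 < tau X"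
    and tau_dvd: "\<And>X. X \<in> S \<Longrightarrow> tau X dvd T"
    and T_pos: "0 < T"
    and demand_le: "(\<Sum>X\<in>S. N X) \<le> T"
begin

definition periods :: "'a \<Rightarrow> nat" where
  "periods X = T div tau X"

definition per_period :: "'a \<Rightarrow> nat" where
  "per_period X = N X div periods X"

definition surplus :: "'a \<Rightarrow> nat" where
  "surplus X = N X mod periods X"

lemma periods_mult: "X \<in> S \<Longrightarrow> periods X * tau X = T"
  using tau_dvd by (simp add: periods_def)

lemma periods_pos: "X \<in> S \<Longrightarrow> 0 < periods X"
  using periods_mult T_pos by (metis gr0I mult_0)

lemma surplus_less: "X \<in> S \<Longrightarrow> surplus X < periods X"
  using periods_pos by (simp add: surplus_def)

lemma demand_eq: "N X = per_period X * periods X + surplus X"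
  by (simp add: per_period_def surplus_def)

text \<open>
  The job \<open>(X, p, k)\<close> is the \<open>k\<close>-th execution of \<open>X\<close> in its \<open>p\<close>-th period of the frame;
  the last one, \<open>k = per_period X\<close>, is optional. Slots are \<open>Inl t\<close>, and the dummy vertices
  \<open>Inr (X, j)\<close>, \<open>j < periods X - surplus X\<close>, can absorb optional jobs of \<open>X\<close>, so that every
  matching executes the optional job in at least \<open>surplus X\<close> periods.
\<close>

definition jobs :: "('a \<times> nat \<times> nat) set" where
  "jobs = (SIGMA X:S. SIGMA p:{..<periods X}. {..per_period X})"

definition candidates :: "'a \<times> nat \<times> nat \<Rightarrow> (nat + 'a \<times> nat) set" where
  "candidates = (\<lambda>(X, p, k). Inl ` {p * tau X..<p * tau X + tau X}
     \<union> (if k = per_period X then Inr ` ({X} \<times> {..<periods X - surplus X}) else {}))"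

definition weight :: "'a \<times> nat \<times> nat \<Rightarrow> nat + 'a \<times> nat \<Rightarrow> nat" where
  "weight = (\<lambda>(X, p, k) u. if u \<notin> candidates (X, p, k) then 0 else
     (case u of Inl _ \<Rightarrow> if k < per_period X then periods X else surplus X | Inr _ \<Rightarrow> tau X))"

lemma weight_Inl:
  "weight (X, p, k) (Inl t) = (if p * tau X \<le> t \<and> t < p * tau X + tau X
     then if k < per_period X then periods X else surplus X else 0)"
  by (auto simp: weight_def candidates_def)

lemma weight_Inr:
  "weight (X, p, k) (Inr y) =
     (if fst y = X \<and> snd y < periods X - surplus X \<and> k = per_period X then tau X else 0)"
  by (cases y) (auto simp: weight_def candidates_def)

lemma finite_jobs: "finite jobs"
  using finite_S by (auto simp: jobs_def intro!: finite_SigmaI)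

lemma finite_candidates: "finite (candidates v)"
  by (auto simp: candidates_def split: prod.splits)

lemma sum_jobs: "(\<Sum>v\<in>jobs. f v) = (\<Sum>X\<in>S. \<Sum>p<periods X. \<Sum>k\<le>per_period X. f (X, p, k))"
  using finite_S by (simp add: jobs_def sum.Sigma)

lemma sum_weight_candidates:
  assumes "v \<in> jobs"
  shows "(\<Sum>u\<in>candidates v. weight v u) = T"
proof -
  obtain X p k where v: "v = (X, p, k)" and X: "X \<in> S" and k: "k \<le> per_period X"
    using assms by (auto simp: jobs_def)
  define I where "I = {p * tau X..<p * tau X + tau X}"
  define D where "D = (if k = per_period X then Inr ` ({X} \<times> {..<periods X - surplus X})
    else {} :: (nat + 'a \<times> nat) set)"
  have cand: "candidates v = Inl ` I \<union> D" by (simp add: candidates_def v I_def D_def)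
  have "(\<Sum>u\<in>Inl ` I. weight v u) = (\<Sum>t\<in>I. if k < per_period X then periods X else surplus X)"
    by (simp add: sum.reindex v weight_Inl I_def)
  also have "\<dots> = tau X * (if k < per_period X then periods X else surplus X)"
    by (simp add: I_def)
  finally have slots: "(\<Sum>u\<in>Inl ` I. weight v u) = \<dots>" .
  have "(\<Sum>y\<in>{X} \<times> {..<periods X - surplus X}. weight v (Inr y))
      = (\<Sum>y\<in>{X} \<times> {..<periods X - surplus X}. tau X)" if "k = per_period X"
    by (rule sum.cong) (auto simp: v weight_Inr that)
  then have "(\<Sum>u\<in>D. weight v u) = (if k = per_period X then (periods X - surplus X) * tau X else 0)"
    by (simp add: D_def sum.reindex)
  moreover note surplus_less[OF X]
  ultimately have "(\<Sum>u\<in>Inl ` I. weight v u) + (\<Sum>u\<in>D. weight v u) = periods X * tau X"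
    using slots k by (auto simp: algebra_simps diff_mult_distrib)
  moreover have "(\<Sum>u\<in>Inl ` I \<union> D. weight v u) = (\<Sum>u\<in>Inl ` I. weight v u) + (\<Sum>u\<in>D. weight v u)"
    by (rule sum.union_disjoint) (auto simp: D_def I_def)
  ultimately show ?thesis using periods_mult[OF X] by (simp add: cand)
qed

lemma sum_slot_weights_eq_demand:
  "(\<Sum>k\<le>per_period X. if k < per_period X then periods X else surplus X) = N X"
proof -
  have "(\<Sum>k<per_period X. if k < per_period X then periods X else surplus X)
      = (\<Sum>k<per_period X. periods X)" by (rule sum.cong) auto
  then show ?thesis by (simp add: lessThan_Suc_atMost[symmetric] demand_eq)
qed

lemma sum_weight_jobs_le: "(\<Sum>v\<in>jobs. weight v u) \<le> T"
proof (cases u)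
  case (Inl t)
  have "(\<Sum>v\<in>jobs. weight v u) = (\<Sum>X\<in>S. \<Sum>p<periods X. \<Sum>k\<le>per_period X. weight (X, p, k) (Inl t))"
    by (simp add: sum_jobs Inl)
  also have "\<dots> \<le> (\<Sum>X\<in>S. N X)"
  proof (rule sum_mono)
    fix X assume X: "X \<in> S"
    have "(\<Sum>k\<le>per_period X. weight (X, p, k) (Inl t)) = (if t div tau X = p then N X else 0)" for p
      using in_period_iff[OF tau_pos[OF X]] sum_slot_weights_eq_demand by (simp add: weight_Inl)
    then show "(\<Sum>p<periods X. \<Sum>k\<le>per_period X. weight (X, p, k) (Inl t)) \<le> N X"
      by (simp add: sum.delta)
  qed
  also have "\<dots> \<le> T" by (rule demand_le)
  finally show ?thesis .
next
  case (Inr y)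
  have "(\<Sum>v\<in>jobs. weight v u) = (\<Sum>X\<in>S. \<Sum>p<periods X. \<Sum>k\<le>per_period X. weight (X, p, k) (Inr y))"
    by (simp add: sum_jobs Inr)
  also have "\<dots> \<le> (\<Sum>X\<in>S. if X = fst y then T else 0)"
  proof (rule sum_mono)
    fix X assume X: "X \<in> S"
    have "(\<Sum>k\<le>per_period X. weight (X, p, k) (Inr y)) \<le> (if X = fst y then tau X else 0)" for p
      by (cases "fst y = X \<and> snd y < periods X - surplus X") (auto simp: weight_Inr)
    then have "(\<Sum>p<periods X. \<Sum>k\<le>per_period X. weight (X, p, k) (Inr y))
        \<le> (\<Sum>p<periods X. if X = fst y then tau X else 0)"
      by (rule sum_mono)
    then show "(\<Sum>p<periods X. \<Sum>k\<le>per_period X. weight (X, p, k) (Inr y))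
        \<le> (if X = fst y then T else 0)"
      using periods_mult[OF X] by (simp split: if_splits)
  qed
  also have "\<dots> \<le> T" using finite_S by (simp add: sum.delta')
  finally show ?thesis .
qed

lemma job_assignment_exists: "\<exists>g. inj_on g jobs \<and> (\<forall>v\<in>jobs. g v \<in> candidates v)"
proof (rule hall_marriage)
  show "hall_condition jobs candidates"
    using finite_jobs finite_candidates T_pos sum_weight_candidates sum_weight_jobs_le
    by (intro hall_condition_of_weights[where w = weight and c = T]) auto
qed (auto simp: finite_jobs finite_candidates)

lemma candidate_slot:
  assumes "(X, p, k) \<in> jobs" and "Inl t \<in> candidates (X, p, k)"
  shows "p * tau X \<le> t" "t < p * tau X + tau X" "t < T"
proof -
  show "p * tau X \<le> t" "t < p * tau X + tau X"
    using assms(2) by (auto simp: candidates_def split: if_splits)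
  moreover have X: "X \<in> S" and "Suc p \<le> periods X" using assms(1) by (auto simp: jobs_def)
  from \<open>Suc p \<le> periods X\<close> have "Suc p * tau X \<le> periods X * tau X" by (rule mult_le_mono1)
  then have "p * tau X + tau X \<le> T" using periods_mult[OF X] by simp
  ultimately show "t < T" by linarith
qed

context
  fixes g :: "'a \<times> nat \<times> nat \<Rightarrow> nat + 'a \<times> nat" and \<sigma> :: "'a schedule"
  assumes g_inj: "inj_on g jobs" and g_cand: "\<forall>v\<in>jobs. g v \<in> candidates v"
    and executes: "\<forall>f. \<forall>v\<in>jobs. \<forall>t. g v = Inl t \<longrightarrow> \<sigma> (f * T + t) = Some (fst v)"
begin

lemma matched_jobs_le_period_count:
  assumes X: "X \<in> S" and p: "p < periods X"
  shows "card {k. k \<le> per_period X \<and> isl (g (X, p, k))} \<le> period_count tau \<sigma> X (f * periods X + p)"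
proof -
  let ?K = "{k. k \<le> per_period X \<and> isl (g (X, p, k))}"
  let ?slot = "\<lambda>k. f * T + projl (g (X, p, k))"
  have job: "(X, p, k) \<in> jobs" if "k \<in> ?K" for k using that X p by (simp add: jobs_def)
  have collapse: "Inl (projl (g (X, p, k))) = g (X, p, k)" if "k \<in> ?K" for k
    using that by (simp add: sum.collapse(1))
  have slot_inj: "inj_on ?slot ?K"
  proof (rule inj_onI)
    fix k1 k2 assume k: "k1 \<in> ?K" "k2 \<in> ?K" and "?slot k1 = ?slot k2"
    then have "Inl (projl (g (X, p, k1))) = Inl (projl (g (X, p, k2)))" by simp
    then have "g (X, p, k1) = g (X, p, k2)" using collapse[OF k(1)] collapse[OF k(2)] by metis
    then show "k1 = k2" using inj_onD[OF g_inj _ job[OF k(1)] job[OF k(2)]] by simp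
  qed
  have slot_in: "?slot k \<in> {t\<in>{(f * periods X + p) * tau X..<(f * periods X + p) * tau X + tau X}.
      \<sigma> t = Some X}" if k: "k \<in> ?K" for k
  proof -
    have "Inl (projl (g (X, p, k))) \<in> candidates (X, p, k)"
      using g_cand job[OF k] by (simp add: collapse[OF k])
    note slot = candidate_slot[OF job[OF k] this]
    have "(f * periods X + p) * tau X = f * T + p * tau X"
      using periods_mult[OF X] by (simp add: algebra_simps)
    moreover have "\<sigma> (?slot k) = Some X"
      using executes[rule_format, OF job[OF k] collapse[OF k, symmetric]] by simp
    ultimately show ?thesis using slot by simp
  qed
  show ?thesis
    unfolding period_count_def by (rule card_inj_on_le[OF slot_inj]) (use slot_in in blast, simp)
qed

lemma matched_counts_balanced:
  assumes X: "X \<in> S"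
  shows "balanced_counts (periods X) (N X) (\<lambda>p. period_count tau \<sigma> X (f * periods X + p))"
proof -
  let ?c = "\<lambda>p. period_count tau \<sigma> X (f * periods X + p)"
  let ?K = "\<lambda>p. {k. k \<le> per_period X \<and> isl (g (X, p, k))}"
  have job: "(X, p, k) \<in> jobs" if "p < periods X" "k \<le> per_period X" for p k
    using that X by (simp add: jobs_def)
  have mandatory: "{..<per_period X} \<subseteq> ?K p" if p: "p < periods X" for p
  proof
    fix k assume "k \<in> {..<per_period X}"
    then have "g (X, p, k) \<in> Inl ` {p * tau X..<p * tau X + tau X}"
      using g_cand job[OF p, of k] by (auto simp: candidates_def)
    then show "k \<in> ?K p" using \<open>k \<in> {..<per_period X}\<close> by auto
  qed
  have base: "per_period X \<le> ?c p" if p: "p < periods X" for p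
    using card_mono[OF _ mandatory[OF p]] matched_jobs_le_period_count[OF X p, of f] by simp
  have extra: "per_period X < ?c p" if p: "p < periods X" and "isl (g (X, p, per_period X))" for p
  proof -
    have "{..per_period X} \<subseteq> ?K p" using mandatory[OF p] that(2) by (auto simp: le_less)
    then show ?thesis
      using card_mono[of "?K p" "{..per_period X}"] matched_jobs_le_period_count[OF X p, of f] by simp
  qed
  let ?D = "{p. p < periods X \<and> \<not> isl (g (X, p, per_period X))}"
  have "inj_on (\<lambda>p. g (X, p, per_period X)) ?D"
    using job by (auto intro!: inj_onI dest: inj_onD[OF g_inj])
  moreover have "(\<lambda>p. g (X, p, per_period X)) ` ?D \<subseteq> Inr ` ({X} \<times> {..<periods X - surplus X})"
    using g_cand job by (fastforce simp: candidates_def)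
  ultimately have "card ?D \<le> card (Inr ` ({X} \<times> {..<periods X - surplus X})
      :: (nat + 'a \<times> nat) set)"
    by (intro card_inj_on_le) auto
  then have "card ?D \<le> periods X - surplus X" by (simp add: card_image)
  moreover have "card {p. p < periods X \<and> isl (g (X, p, per_period X))} + card ?D = periods X"
  proof -
    have "{p. p < periods X \<and> isl (g (X, p, per_period X))} \<union> ?D = {..<periods X}" by auto
    moreover have "card ({p. p < periods X \<and> isl (g (X, p, per_period X))} \<union> ?D)
        = card {p. p < periods X \<and> isl (g (X, p, per_period X))} + card ?D"
      by (rule card_Un_disjoint) auto
    ultimately show ?thesis by simp
  qed
  moreover have "card {p. p < periods X \<and> isl (g (X, p, per_period X))}
      \<le> card {p. p < periods X \<and> per_period X < ?c p}"
    using extra by (intro card_mono) auto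
  ultimately have "surplus X \<le> card {p. p < periods X \<and> per_period X < ?c p}"
    using surplus_less[OF X] by linarith
  then show ?thesis
    using base by (simp add: balanced_counts_def per_period_def[symmetric] surplus_def[symmetric])
qed

end

lemma balanced_schedule_exists:
  "\<exists>\<sigma>. valid_schedule S \<sigma> \<and>
     (\<forall>X\<in>S. \<forall>f. balanced_counts (periods X) (N X) (\<lambda>p. period_count tau \<sigma> X (f * periods X + p)))"
proof -
  obtain g where g_inj: "inj_on g jobs" and g_cand: "\<forall>v\<in>jobs. g v \<in> candidates v"
    using job_assignment_exists by blast
  define \<sigma> where "\<sigma> t = (if Inl (t mod T) \<in> g ` jobs
    then Some (fst (the_inv_into jobs g (Inl (t mod T)))) else None)" for t
  have "the_inv_into jobs g u \<in> jobs" if "u \<in> g ` jobs" for u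
    using the_inv_into_into[OF g_inj that order_refl] .
  moreover have "fst v \<in> S" if "v \<in> jobs" for v using that by (auto simp: jobs_def)
  ultimately have "valid_schedule S \<sigma>"
    unfolding valid_schedule_def \<sigma>_def by (auto split: if_splits)
  moreover have "\<forall>f. \<forall>v\<in>jobs. \<forall>t. g v = Inl t \<longrightarrow> \<sigma> (f * T + t) = Some (fst v)"
  proof (intro allI ballI impI)
    fix f v t assume v: "v \<in> jobs" and gv: "g v = Inl t"
    obtain X p k where "v = (X, p, k)" using prod_cases3 by blast
    then have "t < T" using candidate_slot(3) v g_cand gv by metis
    then have "(f * T + t) mod T = t" by simp
    then show "\<sigma> (f * T + t) = Some (fst v)"
      using v gv the_inv_into_f_f[OF g_inj v] by (force simp: \<sigma>_def)
  qed
  ultimately show ?thesis using matched_counts_balanced[OF g_inj g_cand] by blast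
qed

end

lemma avg_reward_ge_of_balanced:
  fixes r :: "'a \<Rightarrow> nat \<Rightarrow> real" and n :: "nat \<Rightarrow> nat"
  assumes T: "frame_len S tau = m * tau X" and tau: "0 < tau X" and m: "0 < m"
    and decr: "\<forall>i. 1 \<le> i \<and> i < tau X \<longrightarrow> r X (Suc i) \<le> r X i"
    and nonneg: "\<forall>i. 1 \<le> i \<and> i \<le> tau X \<longrightarrow> 0 \<le> r X i"
    and n_le: "\<forall>i. 1 \<le> i \<and> i \<le> tau X \<longrightarrow> n i \<le> m"
    and balanced: "\<forall>f. balanced_counts m (\<Sum>i=1..tau X. n i) (\<lambda>p. period_count tau \<sigma> X (f * m + p))"
  shows "ereal (\<Sum>i=1..tau X. n i * r X i) \<le> avg_reward S tau r \<sigma> X"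
  unfolding avg_reward_def T
proof (rule liminf_ratio_ge_of_frames)
  show "0 < m * tau X" using m tau by simp
  show "0 \<le> (\<Sum>i=1..tau X. n i * r X i)" using nonneg by (auto intro!: sum_nonneg)
  show "\<forall>k. k * (\<Sum>i=1..tau X. n i * r X i) \<le> total_reward tau r \<sigma> X (k * (m * tau X))"
    using total_reward_frames[where tau = tau and r = r and X = X, OF m decr nonneg n_le balanced] by blast
  show "\<forall>a b. a \<le> b \<longrightarrow> total_reward tau r \<sigma> X a \<le> total_reward tau r \<sigma> X b"
    using total_reward_mono[where tau = tau and r = r and X = X, OF tau nonneg] by blast
qed

theorem theorem3:
  fixes S :: "'a set" and tau :: "'a \<Rightarrow> nat"
    and r :: "'a \<Rightarrow> nat \<Rightarrow> real" and n :: "'a \<Rightarrow> nat \<Rightarrow> nat"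
  assumes "finite S"
    and "\<forall>X\<in>S. tau X > 0"
    and "\<forall>X\<in>S. \<forall>i. 1 \<le> i \<and> i < tau X \<longrightarrow> r X (Suc i) \<le> r X i"
    and "\<forall>X\<in>S. \<forall>i. 1 \<le> i \<and> i \<le> tau X \<longrightarrow> 0 \<le> r X i"
    and "\<forall>X\<in>S. \<forall>i. 1 \<le> i \<and> i \<le> tau X \<longrightarrow>
           real (n X i) \<le> real (frame_len S tau) / real (tau X)"
    and "(\<Sum>X\<in>S. \<Sum>i=1..tau X. n X i) \<le> frame_len S tau"
  shows "\<exists>\<sigma>. valid_schedule S \<sigma> \<and>
           (\<forall>X\<in>S. avg_reward S tau r \<sigma> X \<ge> ereal (\<Sum>i=1..tau X. real (n X i) * r X i))"
proof -
  define T where "T = frame_len S tau"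
  define N where "N X = (\<Sum>i=1..tau X. n X i)" for X
  have "Lcm (tau ` S) \<noteq> 0" using assms(1,2) Lcm_0_iff_nat[of "tau ` S"] by fastforce
  then have "0 < T" by (simp add: T_def frame_len_def)
  then interpret frame_demand S tau T N
    using assms(1,2,6) by unfold_locales (auto simp: T_def N_def frame_len_def dvd_Lcm)
  obtain \<sigma> where valid: "valid_schedule S \<sigma>" and balanced:
    "\<forall>X\<in>S. \<forall>f. balanced_counts (periods X) (N X) (\<lambda>p. period_count tau \<sigma> X (f * periods X + p))"
    using balanced_schedule_exists by blast
  have n_le: "n X i \<le> periods X" if X: "X \<in> S" and "1 \<le> i \<and> i \<le> tau X" for X i
  proof -
    have "real (n X i) \<le> real (periods X * tau X) / real (tau X)"
      using assms(5) that periods_mult[OF X] by (simp add: T_def)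
    then show ?thesis using assms(2) X by simp
  qed
  show ?thesis
  proof (intro exI conjI ballI)
    fix X assume X: "X \<in> S"
    show "ereal (\<Sum>i=1..tau X. real (n X i) * r X i) \<le> avg_reward S tau r \<sigma> X"
      using assms(2-4) X periods_mult[OF X] periods_pos[OF X] n_le[OF X] balanced
      by (intro avg_reward_ge_of_balanced) (auto simp: T_def N_def)
  qed (rule valid)
qed

end
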